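(* Let $G$ be a connected graph on $N\ge2$ vertices with minimum vertex degree $D_{\min}\ge1$, and let $\rho$ be $|\psi_G\rangle$ subjected to independent local $Z$-noise with probability $p\in[0,1/2]$ on each qubit. If $$2(1-p)^{D_{\min}+1}\le (1-p)^{D_{\min}}+p^{D_{\min}},$$ then $\rho$ cannot be purified to $|\psi_G\rangle$ by any protocol.
   Context: Graph state $|\psi_G\rangle$: common $+1$ eigenstate of $K_i=X_i\prod_{\{i,j\}\in E_G}Z_j$ (equivalently $|+\rangle^{\otimes N}$ followed by controlled-phase gates along every edge). Local $Z$-noise with probability $p$: $\rho=\sum_{j\in\{0,1\}^N}p^{|j|}(1-p)^{N-|j|}Z_j|\psi_G\rangle\langle\psi_G|Z_j$. Purification: each qubit held by a distinct party holding that qubit from arbitrarily many copies; using SLOCC they must produce $|\psi_G\rangle$ with fidelity arbitrarily close to 1. Known input: a two-qubit Bell-diagonal state with weight $\lambda_{00}$ on the target Bell state is purifiable iff $\lambda_{00}>1/2$. *)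

theory Defs
  imports Complex_Main "HOL-Library.FuncSet"
begin

definition simple_graph_on :: "nat \<Rightarrow> (nat \<Rightarrow> nat \<Rightarrow> bool) \<Rightarrow> bool" where
  "simple_graph_on N E \<longleftrightarrow>
     (\<forall>i j. E i j \<longrightarrow> i < N \<and> j < N) \<and> (\<forall>i j. E i j \<longrightarrow> E j i) \<and> (\<forall>i. \<not> E i i)"

definition graph_connected :: "nat \<Rightarrow> (nat \<Rightarrow> nat \<Rightarrow> bool) \<Rightarrow> bool" where
  "graph_connected N E \<longleftrightarrow> (\<forall>i<N. \<forall>j<N. E\<^sup>*\<^sup>* i j)"

definition degree :: "nat \<Rightarrow> (nat \<Rightarrow> nat \<Rightarrow> bool) \<Rightarrow> nat \<Rightarrow> nat" where
  "degree N E i = card {j. j < N \<and> E i j}"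

definition min_degree :: "nat \<Rightarrow> (nat \<Rightarrow> nat \<Rightarrow> bool) \<Rightarrow> nat" where
  "min_degree N E = Min (degree N E ` {0..<N})"

text \<open>Computational-basis configurations of N qubits (qubit i in state x i).\<close>
definition cfgs :: "nat \<Rightarrow> (nat \<Rightarrow> bool) set" where
  "cfgs N = PiE {0..<N} (\<lambda>_. UNIV)"

definition hweight :: "nat \<Rightarrow> (nat \<Rightarrow> bool) \<Rightarrow> nat" where
  "hweight N s = card {i \<in> {0..<N}. s i}"

text \<open>Amplitudes of |psi_G> = (prod of CZ over edges) |+>^N :
  <x|psi_G> = 2^(-N/2) (-1)^(number of edges {i,j} with x_i = x_j = 1).\<close>
definition graph_amp :: "nat \<Rightarrow> (nat \<Rightarrow> nat \<Rightarrow> bool) \<Rightarrow> (nat \<Rightarrow> bool) \<Rightarrow> real" where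
  "graph_amp N E x =
     (-1) ^ card {(i, j). i < j \<and> j < N \<and> E i j \<and> x i \<and> x j} / sqrt (2 ^ N)"

text \<open>Diagonal action of Z_s = prod_{i: s i} Z_i on basis state x.\<close>
definition zsign :: "nat \<Rightarrow> (nat \<Rightarrow> bool) \<Rightarrow> (nat \<Rightarrow> bool) \<Rightarrow> real" where
  "zsign N s x = (-1) ^ card {i \<in> {0..<N}. s i \<and> x i}"

text \<open>Matrix entries <x| rho |y> of
  rho = sum_s p^|s| (1-p)^(N-|s|) Z_s |psi_G><psi_G| Z_s.\<close>
definition noisy_rho ::
  "nat \<Rightarrow> (nat \<Rightarrow> nat \<Rightarrow> bool) \<Rightarrow> real \<Rightarrow> (nat \<Rightarrow> bool) \<Rightarrow> (nat \<Rightarrow> bool) \<Rightarrow> real" where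
  "noisy_rho N E p x y =
     (\<Sum>s\<in>cfgs N. p ^ hweight N s * (1 - p) ^ (N - hweight N s) *
        (zsign N s x * graph_amp N E x) * (zsign N s y * graph_amp N E y))"

text \<open>With m copies, party i holds m qubits; its local basis states are numbers X i < 2^m,
  bit k of X i being the state of its qubit from copy k.\<close>
definition mcfgs :: "nat \<Rightarrow> nat \<Rightarrow> (nat \<Rightarrow> nat) set" where
  "mcfgs N m = PiE {0..<N} (\<lambda>_. {0..<2 ^ m})"

definition copy_slice :: "(nat \<Rightarrow> nat) \<Rightarrow> nat \<Rightarrow> (nat \<Rightarrow> bool)" where
  "copy_slice X k = (\<lambda>i. bit (X i) k)"

definition rho_copies ::
  "nat \<Rightarrow> (nat \<Rightarrow> nat \<Rightarrow> bool) \<Rightarrow> real \<Rightarrow> nat \<Rightarrow> (nat \<Rightarrow> nat) \<Rightarrow> (nat \<Rightarrow> nat) \<Rightarrow> real" where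
  "rho_copies N E p m X Y = (\<Prod>k<m. noisy_rho N E p (copy_slice X k) (copy_slice Y k))"

text \<open>A local operator of party i maps its 2^m-dimensional space to one qubit:
  entry A i b a (output bit b, input basis index a < 2^m). The global Kraus operator is
  the tensor product over parties.\<close>
definition kraus_prod ::
  "nat \<Rightarrow> (nat \<Rightarrow> bool \<Rightarrow> nat \<Rightarrow> complex) \<Rightarrow> (nat \<Rightarrow> bool) \<Rightarrow> (nat \<Rightarrow> nat) \<Rightarrow> complex" where
  "kraus_prod N A x X = (\<Prod>i<N. A i (x i) (X i))"

text \<open>Unnormalised output of an SLOCC (separable) operation with product Kraus operators
  K_r = A r 0 \<otimes> ... \<otimes> A r (N-1), r < R, applied to rho^{\<otimes> m}:
  sigma = sum_r K_r rho^{\<otimes> m} K_r^dagger.\<close>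
definition slocc_out ::
  "nat \<Rightarrow> (nat \<Rightarrow> nat \<Rightarrow> bool) \<Rightarrow> real \<Rightarrow> nat \<Rightarrow> nat \<Rightarrow>
   (nat \<Rightarrow> nat \<Rightarrow> bool \<Rightarrow> nat \<Rightarrow> complex) \<Rightarrow> (nat \<Rightarrow> bool) \<Rightarrow> (nat \<Rightarrow> bool) \<Rightarrow> complex" where
  "slocc_out N E p m R A x y =
     (\<Sum>r<R. \<Sum>X\<in>mcfgs N m. \<Sum>Y\<in>mcfgs N m.
        kraus_prod N (A r) x X * complex_of_real (rho_copies N E p m X Y) *
        cnj (kraus_prod N (A r) y Y))"

definition out_trace ::
  "nat \<Rightarrow> (nat \<Rightarrow> nat \<Rightarrow> bool) \<Rightarrow> real \<Rightarrow> nat \<Rightarrow> nat \<Rightarrow>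
   (nat \<Rightarrow> nat \<Rightarrow> bool \<Rightarrow> nat \<Rightarrow> complex) \<Rightarrow> complex" where
  "out_trace N E p m R A = (\<Sum>x\<in>cfgs N. slocc_out N E p m R A x x)"

text \<open><psi_G| sigma |psi_G> (amplitudes of psi_G are real).\<close>
definition out_overlap ::
  "nat \<Rightarrow> (nat \<Rightarrow> nat \<Rightarrow> bool) \<Rightarrow> real \<Rightarrow> nat \<Rightarrow> nat \<Rightarrow>
   (nat \<Rightarrow> nat \<Rightarrow> bool \<Rightarrow> nat \<Rightarrow> complex) \<Rightarrow> complex" where
  "out_overlap N E p m R A =
     (\<Sum>x\<in>cfgs N. \<Sum>y\<in>cfgs N.
        complex_of_real (graph_amp N E x) * slocc_out N E p m R A x y *
        complex_of_real (graph_amp N E y))"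

definition out_fidelity ::
  "nat \<Rightarrow> (nat \<Rightarrow> nat \<Rightarrow> bool) \<Rightarrow> real \<Rightarrow> nat \<Rightarrow> nat \<Rightarrow>
   (nat \<Rightarrow> nat \<Rightarrow> bool \<Rightarrow> nat \<Rightarrow> complex) \<Rightarrow> real" where
  "out_fidelity N E p m R A = Re (out_overlap N E p m R A / out_trace N E p m R A)"

definition purifiable :: "nat \<Rightarrow> (nat \<Rightarrow> nat \<Rightarrow> bool) \<Rightarrow> real \<Rightarrow> bool" where
  "purifiable N E p \<longleftrightarrow>
     (\<forall>\<epsilon>>0. \<exists>m R A. out_trace N E p m R A \<noteq> 0 \<and> out_fidelity N E p m R A \<ge> 1 - \<epsilon>)"

end

theory Submission
  imports Defs "HOL-Analysis.Convex"
begin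

text \<open>Let a be a vertex of minimum degree D and b one of its neighbours. Every SLOCC protocol
  is local with respect to the cut between party a and all others, so it maps states that are
  separable across this cut to separable states. Writing q = 1 - p, Z-noise multiplies each
  coherence of the graph state by (1 - 2p) per differing qubit; grouping the noise patterns on
  the neighbourhood of a with their complements writes the noisy state as a mixture of dephased
  pairs of Bell-type states with weights p^k q^(D-k) and p^(D-k) q^k. Each pair is separable when
  (1 - 2p) times either weight is at most the other, and the worst case k = 0 is exactly the
  hypothesis (1 - 2p) q^D \<le> p^D. Conversely, because a has the neighbour b, every product
  vector across the cut has overlap at most 1/2 with the graph state, so every separable output
  has fidelity at most 1/2.\<close>

section \<open>Separability across the cut at one party\<close>

definition product_vector :: "nat \<Rightarrow> ((nat \<Rightarrow> 'v) \<Rightarrow> complex) \<Rightarrow> bool" where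
  "product_vector a u \<longleftrightarrow>
     (\<exists>f g. (\<forall>x z. g (x(a := z)) = g x) \<and> (\<forall>x. u x = f (x a) * g x))"

text \<open>Kernels indexed by configurations of all parties are unnormalised density matrices;
  separability is with respect to the cut between party a and all other parties.\<close>
inductive separable :: "nat \<Rightarrow> ((nat \<Rightarrow> 'v) \<Rightarrow> (nat \<Rightarrow> 'v) \<Rightarrow> complex) \<Rightarrow> bool" for a where
  separable_zero: "separable a (\<lambda>x y. 0)"
| separable_rank_one: "product_vector a u \<Longrightarrow> separable a (\<lambda>x y. u x * cnj (u y))"
| separable_add: "separable a K \<Longrightarrow> separable a L \<Longrightarrow> separable a (\<lambda>x y. K x y + L x y)"

lemma product_vectorI:
  "(\<And>x z. g (x(a := z)) = g x) \<Longrightarrow> (\<And>x. u x = f (x a) * g x) \<Longrightarrow> product_vector a u"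
  unfolding product_vector_def by blast

lemma product_vectorE:
  assumes "product_vector a u"
  obtains f g where "\<And>x. u x = f (x a) * g x" and "\<And>x z. g (x(a := z)) = g x"
proof -
  from assms obtain f g where "\<forall>x. u x = f (x a) * g x" and "\<forall>x z. g (x(a := z)) = g x"
    unfolding product_vector_def by blast
  then show thesis using that by blast
qed

lemma product_vector_const: "product_vector a (\<lambda>_. c)"
  by (rule product_vectorI[where f = "\<lambda>_. c" and g = "\<lambda>_. 1"]) simp_all

lemma product_vector_mult:
  assumes "product_vector a u" and "product_vector a v"
  shows "product_vector a (\<lambda>x. u x * v x)"
proof -
  obtain f g where u: "\<And>x. u x = f (x a) * g x" and g: "\<And>x z. g (x(a := z)) = g x"
    using assms(1) by (elim product_vectorE) blast
  obtain f' g' where v: "\<And>x. v x = f' (x a) * g' x" and g': "\<And>x z. g' (x(a := z)) = g' x"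
    using assms(2) by (elim product_vectorE) blast
  show ?thesis
    by (rule product_vectorI[where f = "\<lambda>b. f b * f' b" and g = "\<lambda>x. g x * g' x"])
       (simp_all add: g g' u v algebra_simps)
qed

lemma separable_cong: "separable a K \<Longrightarrow> (\<And>x y. K x y = L x y) \<Longrightarrow> separable a L"
  by (metis ext)

lemma separable_rank_oneI:
  "product_vector a u \<Longrightarrow> (\<And>x y. K x y = u x * cnj (u y)) \<Longrightarrow> separable a K"
  by (erule separable_cong[OF separable_rank_one]) simp

lemma separable_scaleR:
  assumes "separable a K" and "0 \<le> c"
  shows "separable a (\<lambda>x y. complex_of_real c * K x y)"
  using assms(1)
proof induction
  case separable_zero
  then show ?case by (simp add: separable.separable_zero)
next
  case (separable_rank_one u)
  let ?v = "\<lambda>x. complex_of_real (sqrt c) * u x"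
  have "product_vector a ?v"
    by (rule product_vector_mult[OF product_vector_const separable_rank_one])
  moreover have "complex_of_real c = complex_of_real (sqrt c) * complex_of_real (sqrt c)"
    using assms(2) by (simp flip: of_real_mult)
  ultimately show ?case
    by (elim separable_rank_oneI) (simp add: algebra_simps)
next
  case (separable_add K L)
  then show ?case
    using separable.separable_add[OF separable_add(3,4)] by (simp add: algebra_simps)
qed

lemma separable_scaled_rank_one:
  "product_vector a u \<Longrightarrow> 0 \<le> c \<Longrightarrow> separable a (\<lambda>x y. complex_of_real c * (u x * cnj (u y)))"
  by (rule separable_scaleR[OF separable_rank_one])

lemma separable_mult:
  assumes "separable a K" and "separable a L"
  shows "separable a (\<lambda>x y. K x y * L x y)"
  using assms(1)
proof induction
  case separable_zero
  then show ?case by (simp add: separable.separable_zero)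
next
  case (separable_rank_one u)
  show ?case
    using assms(2)
  proof induction
    case separable_zero
    then show ?case by (simp add: separable.separable_zero)
  next
    case (separable_rank_one v)
    have "product_vector a (\<lambda>x. u x * v x)"
      by (rule product_vector_mult[OF \<open>product_vector a u\<close> separable_rank_one])
    then show ?case by (rule separable_rank_oneI) (simp add: algebra_simps)
  next
    case (separable_add K L)
    then show ?case
      using separable.separable_add[OF separable_add(3,4)] by (simp add: algebra_simps)
  qed
next
  case (separable_add K1 K2)
  then show ?case
    using separable.separable_add[OF separable_add(3,4)] by (simp add: algebra_simps)
qed

lemma separable_one: "separable a (\<lambda>x y. 1)"
  by (rule separable_rank_oneI[OF product_vector_const[of a 1]]) simp

lemma separable_sum:
  "finite I \<Longrightarrow> (\<And>i. i \<in> I \<Longrightarrow> separable a (F i)) \<Longrightarrow> separable a (\<lambda>x y. \<Sum>i\<in>I. F i x y)"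
  by (induction I rule: finite_induct) (auto intro: separable_zero separable_add)

lemma separable_prod:
  "finite I \<Longrightarrow> (\<And>i. i \<in> I \<Longrightarrow> separable a (F i)) \<Longrightarrow> separable a (\<lambda>x y. \<Prod>i\<in>I. F i x y)"
  by (induction I rule: finite_induct) (auto intro: separable_one separable_mult)

lemma separable_copy_slice:
  assumes "separable a (K :: (nat \<Rightarrow> bool) \<Rightarrow> (nat \<Rightarrow> bool) \<Rightarrow> complex)"
  shows "separable a (\<lambda>X Y. K (copy_slice X k) (copy_slice Y k))"
  using assms
proof induction
  case separable_zero
  then show ?case by (simp add: separable.separable_zero)
next
  case (separable_rank_one u)
  then obtain f g where u: "\<And>x. u x = f (x a) * g x" and g: "\<And>x z. g (x(a := z)) = g x"
    by (elim product_vectorE) blast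
  have slice_upd: "copy_slice (X(a := n)) k = (copy_slice X k)(a := bit n k)"
    for X :: "nat \<Rightarrow> nat" and n
    by (auto simp: copy_slice_def)
  have "product_vector a (\<lambda>X. f (bit (X a) k) * g (copy_slice X k))"
    by (rule product_vectorI) (simp_all add: slice_upd g)
  then show ?case by (rule separable_rank_oneI) (simp add: u copy_slice_def)
next
  case (separable_add K L)
  then show ?case using separable.separable_add[OF separable_add(3,4)] by simp
qed

lemma bij_betw_mcfgs_fun_upd:
  assumes "a < N"
  shows "bij_betw (\<lambda>(n, X). X(a := n)) ({0..<2 ^ m} \<times> {X \<in> mcfgs N m. X a = 0}) (mcfgs N m)"
proof (rule bij_betwI[where g = "\<lambda>X. (X a, X(a := 0))"])
  have upd: "X(a := n) \<in> mcfgs N m" if "X \<in> mcfgs N m" "n < 2 ^ m" for X n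
    using that assms PiE_fun_upd[of n "\<lambda>_. {0..<2 ^ m}" a X "{0..<N}"]
    by (simp add: mcfgs_def insert_absorb)
  show "(\<lambda>(n, X). X(a := n)) \<in> {0..<2 ^ m} \<times> {X \<in> mcfgs N m. X a = 0} \<rightarrow> mcfgs N m"
    using upd by auto
  show "(\<lambda>X. (X a, X(a := 0))) \<in> mcfgs N m \<rightarrow> {0..<2 ^ m} \<times> {X \<in> mcfgs N m. X a = 0}"
    using upd assms by (auto simp: mcfgs_def)
qed auto

lemma product_vector_local_kraus:
  assumes "a < N" and g: "\<And>X z. g (X(a := z)) = g X"
  shows "product_vector a (\<lambda>x. \<Sum>X\<in>mcfgs N m. kraus_prod N B x X * (f (X a) * g X))"
proof -
  define M0 where "M0 = {X \<in> mcfgs N m. X a = 0}"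
  define h where "h x X = (\<Prod>i\<in>{..<N} - {a}. B i (x i) (X i)) * g X" for x X
  have split: "kraus_prod N B x (X(a := n)) * (f n * g (X(a := n))) = B a (x a) n * f n * h x X"
    for x X n
  proof -
    have "kraus_prod N B x Y = B a (x a) (Y a) * (\<Prod>i\<in>{..<N} - {a}. B i (x i) (Y i))" for Y
      unfolding kraus_prod_def using \<open>a < N\<close> by (subst prod.remove[of _ a]) auto
    moreover have "(\<Prod>i\<in>{..<N} - {a}. B i (x i) ((X(a := n)) i))
        = (\<Prod>i\<in>{..<N} - {a}. B i (x i) (X i))"
      by (rule prod.cong) auto
    ultimately show ?thesis by (simp add: h_def g)
  qed
  have "(\<Sum>X\<in>mcfgs N m. kraus_prod N B x X * (f (X a) * g X))
      = (\<Sum>(n, X)\<in>{0..<2 ^ m} \<times> M0. kraus_prod N B x (X(a := n)) * (f n * g (X(a := n))))" for x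
    unfolding M0_def
    by (subst sum.reindex_bij_betw[OF bij_betw_mcfgs_fun_upd[OF \<open>a < N\<close>], symmetric])
       (simp add: case_prod_beta)
  also have "\<dots> x = (\<Sum>n<2 ^ m. B a (x a) n * f n) * (\<Sum>X\<in>M0. h x X)" for x
    unfolding split sum_product sum.cartesian_product atLeast0LessThan
    by (rule sum.cong) (auto simp: algebra_simps)
  finally show ?thesis
  proof (rule product_vectorI[rotated])
    show "(\<Sum>X\<in>M0. h (x(a := b)) X) = (\<Sum>X\<in>M0. h x X)" for x b
      unfolding h_def by (intro sum.cong refl arg_cong2[where f = "(*)"] prod.cong) auto
  qed
qed

lemma separable_local_kraus:
  assumes "a < N" and "separable a (K :: (nat \<Rightarrow> nat) \<Rightarrow> (nat \<Rightarrow> nat) \<Rightarrow> complex)"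
  shows "separable a (\<lambda>x y. \<Sum>X\<in>mcfgs N m. \<Sum>Y\<in>mcfgs N m.
           kraus_prod N B x X * K X Y * cnj (kraus_prod N B y Y))"
  using assms(2)
proof induction
  case separable_zero
  then show ?case by (simp add: separable.separable_zero)
next
  case (separable_rank_one u)
  then obtain f g where u: "\<And>x. u x = f (x a) * g x" and g: "\<And>x z. g (x(a := z)) = g x"
    by (elim product_vectorE) blast
  let ?v = "\<lambda>x. \<Sum>X\<in>mcfgs N m. kraus_prod N B x X * (f (X a) * g X)"
  have "product_vector a ?v" by (rule product_vector_local_kraus[OF \<open>a < N\<close> g])
  then show ?case
    by (rule separable_rank_oneI)
       (simp add: u sum_product cnj_sum algebra_simps)
next
  case (separable_add K L)
  then show ?case
    using separable.separable_add[OF separable_add(3,4)] by (simp add: algebra_simps sum.distrib)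
qed

lemma separable_slocc_out:
  assumes "a < N" and "separable a (\<lambda>x y. complex_of_real (noisy_rho N E p x y))"
  shows "separable a (slocc_out N E p m R A)"
proof -
  have "separable a (\<lambda>X Y. \<Prod>k<m.
          complex_of_real (noisy_rho N E p (copy_slice X k) (copy_slice Y k)))"
    by (rule separable_prod) (auto intro: separable_copy_slice[OF assms(2)])
  then have copies: "separable a (\<lambda>X Y. complex_of_real (rho_copies N E p m X Y))"
    unfolding rho_copies_def by simp
  show ?thesis
    unfolding slocc_out_def
    by (rule separable_sum) (auto intro: separable_local_kraus[OF \<open>a < N\<close> copies])
qed

section \<open>Amplitudes of the graph state\<close>

definition active_edges :: "nat \<Rightarrow> (nat \<Rightarrow> nat \<Rightarrow> bool) \<Rightarrow> (nat \<Rightarrow> bool) \<Rightarrow> (nat \<times> nat) set" where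
  "active_edges N E x = {(i, j). i < j \<and> j < N \<and> E i j \<and> x i \<and> x j}"

definition active_neighbours :: "nat \<Rightarrow> (nat \<Rightarrow> nat \<Rightarrow> bool) \<Rightarrow> nat \<Rightarrow> (nat \<Rightarrow> bool) \<Rightarrow> nat set" where
  "active_neighbours N E a x = {j. j < N \<and> E a j \<and> x j}"

definition neighbour_sign :: "nat \<Rightarrow> (nat \<Rightarrow> nat \<Rightarrow> bool) \<Rightarrow> nat \<Rightarrow> (nat \<Rightarrow> bool) \<Rightarrow> real" where
  "neighbour_sign N E a x = (-1) ^ card (active_neighbours N E a x)"

lemma finite_active_edges: "finite (active_edges N E x)"
  by (rule finite_subset[of _ "{..<N} \<times> {..<N}"]) (auto simp: active_edges_def)

lemma finite_active_neighbours: "finite (active_neighbours N E a x)"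
  by (simp add: active_neighbours_def)

lemma card_active_edges_split:
  assumes G: "simple_graph_on N E" and "x a"
  shows "card (active_edges N E x) =
           card (active_edges N E (x(a := False))) + card (active_neighbours N E a x)"
proof -
  have irrefl: "\<not> E i i" and sym: "E i j \<Longrightarrow> E j i" and bound: "E i j \<Longrightarrow> i < N" for i j
    using G by (auto simp: simple_graph_on_def)
  let ?edge = "\<lambda>j. (min a j, max a j)"
  have "active_edges N E x = active_edges N E (x(a := False)) \<union> ?edge ` active_neighbours N E a x"
  proof (intro set_eqI iffI)
    fix e assume "e \<in> active_edges N E x"
    then obtain i j where "e = (i, j)" "i < j" "j < N" "E i j" "x i" "x j"
      by (auto simp: active_edges_def)
    then show "e \<in> active_edges N E (x(a := False)) \<union> ?edge ` active_neighbours N E a x"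
      unfolding active_edges_def active_neighbours_def
      by (cases "i = a"; cases "j = a") (auto intro: rev_image_eqI[of j] rev_image_eqI[of i] sym)
  next
    fix e assume "e \<in> active_edges N E (x(a := False)) \<union> ?edge ` active_neighbours N E a x"
    then show "e \<in> active_edges N E x"
      using \<open>x a\<close> irrefl unfolding active_edges_def active_neighbours_def
      by (auto simp: min_def max_def le_less intro: sym bound split: if_splits)
  qed
  moreover have "active_edges N E (x(a := False)) \<inter> ?edge ` active_neighbours N E a x = {}"
    by (auto simp: active_edges_def)
  moreover have "inj_on ?edge (active_neighbours N E a x)"
    by (rule inj_onI) (auto simp: min_def max_def split: if_splits)
  ultimately show ?thesis
    by (simp add: card_Un_disjoint finite_active_edges finite_active_neighbours card_image)
qed

lemma graph_amp_eq: "graph_amp N E x = (-1) ^ card (active_edges N E x) / sqrt (2 ^ N)"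
  by (simp add: graph_amp_def active_edges_def)

lemma graph_amp_split:
  assumes "simple_graph_on N E"
  shows "graph_amp N E x =
           graph_amp N E (x(a := False)) * (if x a then neighbour_sign N E a x else 1)"
proof (cases "x a")
  case True
  then show ?thesis
    unfolding graph_amp_eq card_active_edges_split[of N E x a, OF assms True] power_add
    by (simp add: neighbour_sign_def)
next
  case False
  then have "x(a := False) = x" by (simp add: fun_upd_idem)
  with False show ?thesis by simp
qed

lemma abs_graph_amp: "\<bar>graph_amp N E x\<bar> = 1 / sqrt (2 ^ N)"
  by (simp add: graph_amp_def abs_div)

lemma neighbour_sign_cases: "neighbour_sign N E a x = 1 \<or> neighbour_sign N E a x = -1"
  by (cases "even (card (active_neighbours N E a x))") (auto simp: neighbour_sign_def)

lemma neighbour_sign_fun_upd_self: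
  assumes "simple_graph_on N E"
  shows "neighbour_sign N E a (x(a := v)) = neighbour_sign N E a x"
proof -
  have "active_neighbours N E a (x(a := v)) = active_neighbours N E a x"
    using assms by (auto simp: active_neighbours_def simple_graph_on_def)
  then show ?thesis by (simp add: neighbour_sign_def)
qed

lemma neighbour_sign_flip:
  assumes "b < N" and "E a b"
  shows "neighbour_sign N E a (x(b := \<not> x b)) = - neighbour_sign N E a x"
proof -
  have flip:
    "card (active_neighbours N E a y) = Suc (card (active_neighbours N E a (y(b := False))))"
    if "y b" for y
  proof -
    have "active_neighbours N E a y = insert b (active_neighbours N E a (y(b := False)))"
      using that assms by (auto simp: active_neighbours_def)
    then show ?thesis by (simp add: finite_active_neighbours active_neighbours_def)
  qed
  show ?thesis
  proof (cases "x b")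
    case True
    then show ?thesis using flip[of x] by (simp add: neighbour_sign_def)
  next
    case False
    then have "x = (x(b := True))(b := False)" by (intro ext) auto
    then show ?thesis using flip[of "x(b := True)"] False by (simp add: neighbour_sign_def)
  qed
qed

lemma finite_cfgs: "finite (cfgs N)"
  by (simp add: cfgs_def finite_PiE)

lemma cfgs_fun_upd: "x \<in> cfgs N \<Longrightarrow> a < N \<Longrightarrow> x(a := v) \<in> cfgs N"
  using PiE_fun_upd[of v "\<lambda>_. UNIV" a x "{0..<N}"] by (simp add: cfgs_def insert_absorb)

lemma sum_cfgs_split:
  assumes "a < N"
  shows "(\<Sum>x\<in>cfgs N. h x) = (\<Sum>z\<in>{z \<in> cfgs N. \<not> z a}. h z + h (z(a := True)))"
proof -
  let ?C = "{z \<in> cfgs N. \<not> z a}"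
  have split: "cfgs N = ?C \<union> (\<lambda>z. z(a := True)) ` ?C"
  proof (intro set_eqI iffI)
    fix x assume x: "x \<in> cfgs N"
    show "x \<in> ?C \<union> (\<lambda>z. z(a := True)) ` ?C"
    proof (cases "x a")
      case True
      have "x(a := False) \<in> ?C" using cfgs_fun_upd[OF x assms] by simp
      moreover have "x = (x(a := False))(a := True)" using True by (intro ext) auto
      ultimately show ?thesis by (intro UnI2 rev_image_eqI)
    qed (use x in simp)
  qed (use cfgs_fun_upd[OF _ assms, of _ True] in auto)
  have "inj_on (\<lambda>z. z(a := True)) ?C"
    by (rule inj_onI) (simp add: fun_eq_iff, metis)
  then have "(\<Sum>x\<in>(\<lambda>z. z(a := True)) ` ?C. h x) = (\<Sum>z\<in>?C. h (z(a := True)))"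
    by (simp add: sum.reindex)
  moreover have "?C \<inter> (\<lambda>z. z(a := True)) ` ?C = {}" by auto
  ultimately show ?thesis
    by (subst split) (simp add: sum.union_disjoint finite_cfgs sum.distrib)
qed

lemma card_neighbour_sign_class:
  assumes G: "simple_graph_on N E" and "a < N" "b < N" "E a b" and c: "c = 1 \<or> c = -1"
  shows "4 * card {z \<in> cfgs N. \<not> z a \<and> neighbour_sign N E a z = c} = 2 ^ N"
proof -
  define S where "S c = {z \<in> cfgs N. \<not> z a \<and> neighbour_sign N E a z = c}" for c
  define flip where "flip z = z(b := \<not> z b)" for z :: "nat \<Rightarrow> bool"
  have "a \<noteq> b" using G \<open>E a b\<close> by (auto simp: simple_graph_on_def)
  have flip_S: "flip z \<in> S (- c)" if "z \<in> S c" for z c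
    using that \<open>a \<noteq> b\<close> cfgs_fun_upd[OF _ \<open>b < N\<close>, of z "\<not> z b"]
    by (simp add: S_def flip_def neighbour_sign_flip[where E = E and a = a, OF \<open>b < N\<close> \<open>E a b\<close>])
  have "flip (flip z) = z" for z by (simp add: flip_def)
  then have "bij_betw flip (S 1) (S (-1))"
    using flip_S[of _ 1] flip_S[of _ "-1"] by (intro bij_betwI[where g = flip]) auto
  then have same_card: "card (S 1) = card (S (-1))"
    by (rule bij_betw_same_card)
  have "2 ^ N = card (cfgs N)" by (simp add: cfgs_def card_PiE)
  also have "\<dots> = 2 * card {z \<in> cfgs N. \<not> z a}"
    using sum_cfgs_split[OF \<open>a < N\<close>, of "\<lambda>_. 1::nat"] by simp
  also have "{z \<in> cfgs N. \<not> z a} = S 1 \<union> S (-1)"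
    using neighbour_sign_cases by (auto simp: S_def)
  also have "card \<dots> = card (S 1) + card (S (-1))"
    by (rule card_Un_disjoint) (auto simp: S_def finite_cfgs)
  finally show ?thesis
    using same_card c unfolding S_def by auto
qed

section \<open>Overlap of product vectors with the graph state\<close>

lemma Cauchy_Schwarz_cmod_2:
  "(cmod (f0 * A + f1 * B))\<^sup>2 \<le> ((cmod f0)\<^sup>2 + (cmod f1)\<^sup>2) * ((cmod A)\<^sup>2 + (cmod B)\<^sup>2)"
proof -
  have "cmod (f0 * A + f1 * B) \<le> cmod f0 * cmod A + cmod f1 * cmod B"
    by (metis norm_mult norm_triangle_ineq)
  then have "(cmod (f0 * A + f1 * B))\<^sup>2 \<le> (cmod f0 * cmod A + cmod f1 * cmod B)\<^sup>2"
    by (simp add: power_mono)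
  also have "\<dots> \<le> ((cmod f0)\<^sup>2 + (cmod f1)\<^sup>2) * ((cmod A)\<^sup>2 + (cmod B)\<^sup>2)"
    using zero_le_power2[of "cmod f0 * cmod B - cmod f1 * cmod A"]
    by (simp add: power2_eq_square algebra_simps)
  finally show ?thesis .
qed

lemma cmod_parallelogram: "(cmod (P + M))\<^sup>2 + (cmod (P - M))\<^sup>2 = 2 * (cmod P)\<^sup>2 + 2 * (cmod M)\<^sup>2"
  unfolding cmod_power2 by (simp add: power2_eq_square algebra_simps)

lemma cmod_sum_constant_modulus_power2_le:
  assumes "finite S" and "\<And>z. z \<in> S \<Longrightarrow> \<bar>\<psi> z\<bar> = c"
  shows "(cmod (\<Sum>z\<in>S. complex_of_real (\<psi> z) * g z))\<^sup>2 \<le> c\<^sup>2 * card S * (\<Sum>z\<in>S. (cmod (g z))\<^sup>2)"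
proof -
  have "cmod (\<Sum>z\<in>S. complex_of_real (\<psi> z) * g z) \<le> (\<Sum>z\<in>S. \<bar>c\<bar> * cmod (g z))"
    using assms(2) by (force intro: order.trans[OF norm_sum] sum_mono simp: norm_mult)
  then have "(cmod (\<Sum>z\<in>S. complex_of_real (\<psi> z) * g z))\<^sup>2 \<le> (\<bar>c\<bar> * (\<Sum>z\<in>S. cmod (g z)))\<^sup>2"
    by (simp add: power_mono sum_distrib_left)
  also have "\<dots> \<le> c\<^sup>2 * ((\<Sum>z\<in>S. (cmod (g z))\<^sup>2) * card S)"
    unfolding power_mult_distrib power2_abs
    by (rule mult_left_mono[OF sum_squared_le_sum_of_squares]) simp
  finally show ?thesis by (simp add: algebra_simps)
qed

lemma cmod_graph_amp_sums_power2_le: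
  assumes G: "simple_graph_on N E" and "a < N" "b < N" "E a b"
  defines "C \<equiv> {z \<in> cfgs N. \<not> z a}"
  shows "(cmod (\<Sum>z\<in>C. complex_of_real (graph_amp N E z) * g z))\<^sup>2
         + (cmod (\<Sum>z\<in>C. complex_of_real (graph_amp N E z * neighbour_sign N E a z) * g z))\<^sup>2
         \<le> (\<Sum>z\<in>C. (cmod (g z))\<^sup>2) / 2"
proof -
  define S where "S c = {z \<in> cfgs N. \<not> z a \<and> neighbour_sign N E a z = c}" for c
  define amp_sum where "amp_sum c = (\<Sum>z\<in>S c. complex_of_real (graph_amp N E z) * g z)" for c
  define norm_sum where "norm_sum c = (\<Sum>z\<in>S c. (cmod (g z))\<^sup>2)" for c
  have fin: "finite (S c)" for c by (simp add: S_def finite_cfgs)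
  have class_bound: "(cmod (amp_sum c))\<^sup>2 \<le> norm_sum c / 4" if "c = 1 \<or> c = -1" for c :: real
  proof -
    have "(cmod (amp_sum c))\<^sup>2 \<le> (1 / sqrt (2 ^ N))\<^sup>2 * card (S c) * norm_sum c"
      unfolding amp_sum_def norm_sum_def
      by (rule cmod_sum_constant_modulus_power2_le[OF fin abs_graph_amp])
    also have "(1 / sqrt (2 ^ N))\<^sup>2 * card (S c) = (1 / 4 :: real)"
    proof -
      have "4 * card (S c) = 2 ^ N"
        using card_neighbour_sign_class[OF G \<open>a < N\<close> \<open>b < N\<close> \<open>E a b\<close> that]
        unfolding S_def .
      then have "real (4 * card (S c)) = real (2 ^ N)" by (rule arg_cong)
      then show ?thesis by (simp add: power_divide field_simps)
    qed
    finally show ?thesis by simp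
  qed
  have C_split: "C = S 1 \<union> S (-1)" and disj: "S 1 \<inter> S (-1) = {}"
    using neighbour_sign_cases by (auto simp: C_def S_def)
  have signed_sum: "(\<Sum>z\<in>S c. complex_of_real (graph_amp N E z * neighbour_sign N E a z) * g z)
      = complex_of_real c * amp_sum c" for c
    unfolding amp_sum_def sum_distrib_left by (rule sum.cong) (auto simp: S_def)
  have A: "(\<Sum>z\<in>C. complex_of_real (graph_amp N E z) * g z) = amp_sum 1 + amp_sum (-1)"
    unfolding C_split amp_sum_def by (rule sum.union_disjoint[OF fin fin disj])
  have B: "(\<Sum>z\<in>C. complex_of_real (graph_amp N E z * neighbour_sign N E a z) * g z)
      = amp_sum 1 - amp_sum (-1)"
    unfolding C_split sum.union_disjoint[OF fin fin disj] signed_sum by simp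
  have norms: "(\<Sum>z\<in>C. (cmod (g z))\<^sup>2) = norm_sum 1 + norm_sum (-1)"
    unfolding C_split norm_sum_def by (rule sum.union_disjoint[OF fin fin disj])
  show ?thesis
    unfolding A B norms cmod_parallelogram using class_bound[of 1] class_bound[of "-1"] by simp
qed

lemma cmod_overlap_product_vector_power2_le:
  assumes G: "simple_graph_on N E" and "a < N" "b < N" "E a b" and "product_vector a u"
  shows "(cmod (\<Sum>x\<in>cfgs N. complex_of_real (graph_amp N E x) * u x))\<^sup>2
           \<le> (\<Sum>x\<in>cfgs N. (cmod (u x))\<^sup>2) / 2"
proof -
  obtain f g where u: "\<And>x. u x = f (x a) * g x" and g: "\<And>x v. g (x(a := v)) = g x"
    using \<open>product_vector a u\<close> by (elim product_vectorE) blast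
  let ?C = "{z \<in> cfgs N. \<not> z a}"
  let ?A = "\<Sum>z\<in>?C. complex_of_real (graph_amp N E z) * g z"
  let ?B = "\<Sum>z\<in>?C. complex_of_real (graph_amp N E z * neighbour_sign N E a z) * g z"
  have amp_True: "graph_amp N E (z(a := True)) = graph_amp N E z * neighbour_sign N E a z"
    if "\<not> z a" for z
    using graph_amp_split[OF G, of "z(a := True)" a] that
    by (simp add: neighbour_sign_fun_upd_self[OF G] fun_upd_idem)
  have "(\<Sum>x\<in>cfgs N. complex_of_real (graph_amp N E x) * u x) = f False * ?A + f True * ?B"
    unfolding sum_cfgs_split[OF \<open>a < N\<close>]
    by (simp add: u g amp_True fun_upd_idem sum.distrib sum_distrib_left algebra_simps)
  then have "(cmod (\<Sum>x\<in>cfgs N. complex_of_real (graph_amp N E x) * u x))\<^sup>2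
      \<le> ((cmod (f False))\<^sup>2 + (cmod (f True))\<^sup>2) * ((cmod ?A)\<^sup>2 + (cmod ?B)\<^sup>2)"
    by (simp add: Cauchy_Schwarz_cmod_2)
  also have "\<dots> \<le> ((cmod (f False))\<^sup>2 + (cmod (f True))\<^sup>2) * ((\<Sum>z\<in>?C. (cmod (g z))\<^sup>2) / 2)"
    by (rule mult_left_mono[OF cmod_graph_amp_sums_power2_le[OF G \<open>a < N\<close> \<open>b < N\<close> \<open>E a b\<close>]])
       simp
  also have "\<dots> = (\<Sum>x\<in>cfgs N. (cmod (u x))\<^sup>2) / 2"
    unfolding sum_cfgs_split[OF \<open>a < N\<close>]
    by (simp add: u g norm_mult power_mult_distrib sum_distrib_left algebra_simps)
  finally show ?thesis .
qed

definition graph_overlap ::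
  "nat \<Rightarrow> (nat \<Rightarrow> nat \<Rightarrow> bool) \<Rightarrow> ((nat \<Rightarrow> bool) \<Rightarrow> (nat \<Rightarrow> bool) \<Rightarrow> complex) \<Rightarrow> complex" where
  "graph_overlap N E \<sigma> = (\<Sum>x\<in>cfgs N. \<Sum>y\<in>cfgs N.
     complex_of_real (graph_amp N E x) * \<sigma> x y * complex_of_real (graph_amp N E y))"

definition kernel_trace :: "nat \<Rightarrow> ((nat \<Rightarrow> bool) \<Rightarrow> (nat \<Rightarrow> bool) \<Rightarrow> complex) \<Rightarrow> complex" where
  "kernel_trace N \<sigma> = (\<Sum>x\<in>cfgs N. \<sigma> x x)"

lemma separable_graph_overlap_le_half_trace:
  assumes G: "simple_graph_on N E" and "a < N" "b < N" "E a b" and "separable a \<sigma>"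
  shows "\<exists>ov tr. graph_overlap N E \<sigma> = complex_of_real ov \<and> kernel_trace N \<sigma> = complex_of_real tr \<and>
           0 \<le> tr \<and> ov \<le> tr / 2"
  using assms(5)
proof induction
  case separable_zero
  then show ?case by (intro exI[of _ 0]) (simp add: graph_overlap_def kernel_trace_def)
next
  case (separable_rank_one u)
  define overlap where "overlap = (\<Sum>x\<in>cfgs N. complex_of_real (graph_amp N E x) * u x)"
  have "graph_overlap N E (\<lambda>x y. u x * cnj (u y)) = overlap * cnj overlap"
    unfolding graph_overlap_def overlap_def sum_product cnj_sum
    by (intro sum.cong refl) (simp add: algebra_simps)
  then have "graph_overlap N E (\<lambda>x y. u x * cnj (u y)) = complex_of_real ((cmod overlap)\<^sup>2)"
    by (simp only: complex_norm_square)
  moreover have "kernel_trace N (\<lambda>x y. u x * cnj (u y))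
      = complex_of_real (\<Sum>x\<in>cfgs N. (cmod (u x))\<^sup>2)"
    unfolding kernel_trace_def of_real_sum complex_norm_square ..
  ultimately show ?case
    using cmod_overlap_product_vector_power2_le[OF G \<open>a < N\<close> \<open>b < N\<close> \<open>E a b\<close> separable_rank_one]
    unfolding overlap_def by (blast intro: sum_nonneg zero_le_power2)
next
  case (separable_add K L)
  then obtain ov1 tr1 ov2 tr2 where
    "graph_overlap N E K = complex_of_real ov1" "kernel_trace N K = complex_of_real tr1"
    "graph_overlap N E L = complex_of_real ov2" "kernel_trace N L = complex_of_real tr2"
    "0 \<le> tr1" "ov1 \<le> tr1 / 2" "0 \<le> tr2" "ov2 \<le> tr2 / 2"
    by blast
  then show ?case
    by (intro exI[of _ "ov1 + ov2"] exI[of _ "tr1 + tr2"])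
       (simp add: graph_overlap_def kernel_trace_def algebra_simps sum.distrib)
qed

lemma out_fidelity_le_half:
  assumes G: "simple_graph_on N E" and "a < N" "b < N" "E a b"
    and "separable a (\<lambda>x y. complex_of_real (noisy_rho N E p x y))"
    and "out_trace N E p m R A \<noteq> 0"
  shows "out_fidelity N E p m R A \<le> 1 / 2"
proof -
  obtain ov tr where "out_overlap N E p m R A = complex_of_real ov"
    and tr: "out_trace N E p m R A = complex_of_real tr" "0 \<le> tr" and "ov \<le> tr / 2"
    using separable_graph_overlap_le_half_trace[OF G \<open>a < N\<close> \<open>b < N\<close> \<open>E a b\<close>
        separable_slocc_out[OF \<open>a < N\<close> assms(5)]]
    unfolding out_overlap_def out_trace_def graph_overlap_def kernel_trace_def by blast
  moreover have "0 < tr" using tr \<open>out_trace N E p m R A \<noteq> 0\<close> by auto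
  ultimately show ?thesis
    by (simp add: out_fidelity_def divide_simps flip: of_real_divide)
qed

section \<open>Separability of the noisy graph state\<close>

definition dephasing :: "real \<Rightarrow> (nat \<Rightarrow> bool) \<Rightarrow> (nat \<Rightarrow> bool) \<Rightarrow> nat \<Rightarrow> real" where
  "dephasing p x y i = (if x i = y i then 1 else 1 - 2 * p)"

definition zsign_on :: "nat set \<Rightarrow> (nat \<Rightarrow> bool) \<Rightarrow> (nat \<Rightarrow> bool) \<Rightarrow> real" where
  "zsign_on A s x = (\<Prod>i\<in>A. if s i \<and> x i then -1 else 1)"

definition noise_weight :: "real \<Rightarrow> nat set \<Rightarrow> (nat \<Rightarrow> bool) \<Rightarrow> real" where
  "noise_weight p A s = (\<Prod>i\<in>A. if s i then p else 1 - p)"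

definition flip_on :: "nat set \<Rightarrow> (nat \<Rightarrow> bool) \<Rightarrow> (nat \<Rightarrow> bool)" where
  "flip_on A s = (\<lambda>i. if i \<in> A then \<not> s i else undefined)"

lemma prod_if_eq_power_card:
  assumes "finite A"
  shows "(\<Prod>i\<in>A. if P i then c else d) = c ^ card {i \<in> A. P i} * d ^ card {i \<in> A. \<not> P i}"
proof -
  have "A \<inter> {x. P x} = {i \<in> A. P i}" and "A \<inter> - {x. P x} = {i \<in> A. \<not> P i}" by auto
  then show ?thesis by (simp add: prod.If_cases[OF assms])
qed

lemma card_filter_add_card_filter_not:
  "finite A \<Longrightarrow> card {i \<in> A. P i} + card {i \<in> A. \<not> P i} = card A"
  using card_Int_Diff[of A "Collect P"] by (simp add: Int_def set_diff_eq)

lemma prod_dephasing_eq_sum: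
  assumes "finite A"
  shows "(\<Prod>i\<in>A. dephasing p x y i) =
           (\<Sum>s\<in>PiE A (\<lambda>_. UNIV). noise_weight p A s * zsign_on A s x * zsign_on A s y)"
proof -
  define summand where "summand i v = (if v then p else 1 - p) * (if v \<and> x i then -1 else 1) *
    (if v \<and> y i then -1 else (1::real))" for i v
  have "(\<Prod>i\<in>A. dephasing p x y i) = (\<Prod>i\<in>A. \<Sum>v\<in>UNIV. summand i v)"
    by (rule prod.cong) (auto simp: summand_def dephasing_def UNIV_bool)
  also have "\<dots> = (\<Sum>s\<in>PiE A (\<lambda>_. UNIV). \<Prod>i\<in>A. summand i (s i))"
    by (rule prod_sum_PiE) (use assms in auto)
  finally show ?thesis
    by (simp add: summand_def noise_weight_def zsign_on_def prod.distrib)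
qed

lemma noisy_rho_eq_dephased:
  "noisy_rho N E p x y = (\<Prod>i\<in>{0..<N}. dephasing p x y i) * graph_amp N E x * graph_amp N E y"
proof -
  have "p ^ hweight N s * (1 - p) ^ (N - hweight N s) = noise_weight p {0..<N} s" for s
  proof -
    have "card {i \<in> {0..<N}. \<not> s i} = N - hweight N s"
      using card_filter_add_card_filter_not[of "{0..<N}" s] by (simp add: hweight_def)
    then show ?thesis by (simp add: noise_weight_def prod_if_eq_power_card hweight_def)
  qed
  moreover have "zsign N s x = zsign_on {0..<N} s x" for s x
    by (simp add: zsign_def zsign_on_def prod_if_eq_power_card)
  ultimately show ?thesis
    unfolding noisy_rho_def prod_dephasing_eq_sum[OF finite_atLeastLessThan] sum_distrib_right
    by (intro sum.cong) (simp_all add: cfgs_def algebra_simps)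
qed

lemma flip_on_PiE: "s \<in> PiE A (\<lambda>_. UNIV) \<Longrightarrow> flip_on A s \<in> PiE A (\<lambda>_. UNIV)"
  by (auto simp: flip_on_def PiE_iff extensional_def)

lemma flip_on_flip_on: "s \<in> PiE A (\<lambda>_. UNIV) \<Longrightarrow> flip_on A (flip_on A s) = s"
  by (auto simp: flip_on_def PiE_iff extensional_def)

lemma sum_flip_on:
  "(\<Sum>s\<in>PiE A (\<lambda>_. UNIV). h (flip_on A s)) = (\<Sum>s\<in>PiE A (\<lambda>_. UNIV). h s)"
  by (rule sum.reindex_bij_betw, rule bij_betwI[where g = "flip_on A"])
     (auto simp: flip_on_PiE flip_on_flip_on)

lemma zsign_on_flip_on:
  "zsign_on A (flip_on A s) x = zsign_on A s x * (\<Prod>i\<in>A. if x i then -1 else 1)"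
  unfolding zsign_on_def prod.distrib[symmetric] flip_on_def by (rule prod.cong) auto

lemma zsign_on_fun_upd: "a \<notin> A \<Longrightarrow> zsign_on A s (x(a := z)) = zsign_on A s x"
  unfolding zsign_on_def by (rule prod.cong) auto

lemma flip_weight_le:
  fixes p :: real
  assumes "0 \<le> p" "p \<le> 1 / 2" and "k \<le> D" and worst: "(1 - 2 * p) * (1 - p) ^ D \<le> p ^ D"
  shows "(1 - 2 * p) * (p ^ k * (1 - p) ^ (D - k)) \<le> p ^ (D - k) * (1 - p) ^ k"
proof (cases "2 * k \<le> D")
  case True
  define e where "e = D - 2 * k"
  have "D = e + 2 * k" using True by (simp add: e_def)
  then have "(1 - 2 * p) * (1 - p) ^ e * (1 - p) ^ (2 * k) \<le> p ^ e * p ^ (2 * k)"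
    using worst by (simp add: power_add algebra_simps)
  also have "\<dots> \<le> p ^ e * (1 - p) ^ (2 * k)"
    using assms(1,2) by (intro mult_left_mono power_mono) auto
  finally have "(1 - 2 * p) * (1 - p) ^ e \<le> p ^ e"
    using assms(2) by (simp add: mult_le_cancel_right)
  then have "(p ^ k * (1 - p) ^ k) * ((1 - 2 * p) * (1 - p) ^ e) \<le> (p ^ k * (1 - p) ^ k) * p ^ e"
    using assms(1,2) by (intro mult_left_mono) auto
  moreover have "D - k = e + k" using True by (simp add: e_def)
  ultimately show ?thesis by (simp add: power_add algebra_simps)
next
  case False
  define e where "e = 2 * k - D"
  define j where "j = D - k"
  have "(1 - 2 * p) * p ^ e \<le> 1 * (1 - p) ^ e"
    using assms(1,2) by (intro mult_mono power_mono) auto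
  then have "(p ^ j * (1 - p) ^ j) * ((1 - 2 * p) * p ^ e) \<le> (p ^ j * (1 - p) ^ j) * (1 - p) ^ e"
    using assms(1,2) by (intro mult_left_mono) auto
  moreover have "k = j + e" using False \<open>k \<le> D\<close> by (simp add: e_def j_def)
  ultimately show ?thesis unfolding j_def[symmetric] by (simp add: power_add algebra_simps)
qed

lemma noise_weight_flip_on_ge:
  assumes "finite A" and "0 \<le> p" "p \<le> 1 / 2"
    and "(1 - 2 * p) * (1 - p) ^ card A \<le> p ^ card A"
  shows "(1 - 2 * p) * noise_weight p A s \<le> noise_weight p A (flip_on A s)"
proof -
  define k where "k = card {i \<in> A. s i}"
  have "k \<le> card A" unfolding k_def using \<open>finite A\<close> by (intro card_mono) auto
  have not_k: "card {i \<in> A. \<not> s i} = card A - k"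
    using card_filter_add_card_filter_not[OF \<open>finite A\<close>, of s] by (simp add: k_def)
  have "noise_weight p A s = p ^ k * (1 - p) ^ (card A - k)"
    unfolding noise_weight_def prod_if_eq_power_card[OF \<open>finite A\<close>] k_def[symmetric] not_k ..
  moreover have "noise_weight p A (flip_on A s) = p ^ (card A - k) * (1 - p) ^ k"
  proof -
    have "{i \<in> A. flip_on A s i} = {i \<in> A. \<not> s i}" "{i \<in> A. \<not> flip_on A s i} = {i \<in> A. s i}"
      by (auto simp: flip_on_def)
    then show ?thesis
      unfolding noise_weight_def prod_if_eq_power_card[OF \<open>finite A\<close>] by (simp add: not_k k_def)
  qed
  ultimately show ?thesis
    using flip_weight_le[OF assms(2,3) \<open>k \<le> card A\<close> assms(4)] by simp
qed

text \<open>With respect to qubit a and the vectors X0, X1 of the other parties, this kernel mixes the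
  two Bell-type vectors |0>X0 + |1>X1 and |0>X1 + |1>X0 with weights W0, W1 and damps the
  coherences of qubit a by r.\<close>
definition dephased_Bell_pair ::
  "nat \<Rightarrow> real \<Rightarrow> real \<Rightarrow> real \<Rightarrow> ((nat \<Rightarrow> bool) \<Rightarrow> real) \<Rightarrow> ((nat \<Rightarrow> bool) \<Rightarrow> real) \<Rightarrow>
   (nat \<Rightarrow> bool) \<Rightarrow> (nat \<Rightarrow> bool) \<Rightarrow> real" where
  "dephased_Bell_pair a r W0 W1 X0 X1 x y = (if x a = y a then 1 else r) *
     (W0 * (if x a then X1 x else X0 x) * (if y a then X1 y else X0 y) +
      W1 * (if x a then X0 x else X1 x) * (if y a then X0 y else X1 y))"

lemma dephased_Bell_pair_swap:
  "dephased_Bell_pair a r W1 W0 X1 X0 = dephased_Bell_pair a r W0 W1 X0 X1"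
  by (intro ext) (simp add: dephased_Bell_pair_def algebra_simps)

lemma separable_dephased_Bell_pair_ordered:
  assumes X0: "\<And>x z. X0 (x(a := z)) = X0 x" and X1: "\<And>x z. X1 (x(a := z)) = X1 x"
    and "0 \<le> r" "r \<le> 1" and "0 \<le> W1" "W1 \<le> W0" "r * W0 \<le> W1"
  shows "separable a (\<lambda>x y. complex_of_real (dephased_Bell_pair a r W0 W1 X0 X1 x y))"
proof -
  define c0 c1 where "c0 x = complex_of_real (X0 x)" and "c1 x = complex_of_real (X1 x)" for x
  define vec where "vec e0 e1 g x = (if x a then e1 else e0) * g x"
    for e0 e1 :: complex and g :: "(nat \<Rightarrow> bool) \<Rightarrow> complex" and x
  define proj where "proj v x y = v x * cnj (v y)" for v :: "(nat \<Rightarrow> bool) \<Rightarrow> complex" and x y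
  have c0: "c0 (x(a := z)) = c0 x" and c1: "c1 (x(a := z)) = c1 x" for x z
    by (simp_all add: c0_def c1_def X0 X1)
  have vec: "product_vector a (vec e0 e1 g)" if "\<And>x z. g (x(a := z)) = g x" for e0 e1 g
    by (rule product_vectorI[where f = "\<lambda>b. if b then e1 else e0" and g = g])
       (simp_all add: vec_def that)
  \<comment> \<open>Four vectors with phases 1, -1, i, -i on qubit a carry the damped coherences; four
    computational-basis terms supply the remaining diagonal weights (1 - r) W0 and W1 - r W0.\<close>
  define K where "K x y =
      complex_of_real (r * (W0 + W1) / 4) * proj (vec 1 1 (\<lambda>x. c0 x + c1 x)) x y +
      complex_of_real (r * (W0 + W1) / 4) * proj (vec 1 (-1) (\<lambda>x. c0 x - c1 x)) x y +
      complex_of_real (r * (W0 - W1) / 4) * proj (vec 1 \<i> (\<lambda>x. c0 x - \<i> * c1 x)) x y +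
      complex_of_real (r * (W0 - W1) / 4) * proj (vec 1 (- \<i>) (\<lambda>x. c0 x + \<i> * c1 x)) x y +
      complex_of_real ((1 - r) * W0) * proj (vec 1 0 c0) x y +
      complex_of_real ((1 - r) * W0) * proj (vec 0 1 c1) x y +
      complex_of_real (W1 - r * W0) * proj (vec 1 0 c1) x y +
      complex_of_real (W1 - r * W0) * proj (vec 0 1 c0) x y" for x y
  have "separable a K"
    unfolding K_def proj_def using assms
    by (intro separable_add separable_scaled_rank_one vec) (simp_all add: c0 c1)
  then show ?thesis
  proof (rule separable_cong)
    fix x y
    show "K x y = complex_of_real (dephased_Bell_pair a r W0 W1 X0 X1 x y)"
      unfolding K_def proj_def vec_def c0_def c1_def dephased_Bell_pair_def
      by (cases "x a"; cases "y a";
          simp add: algebra_simps; simp add: field_simps; simp add: algebra_simps)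
  qed
qed

lemma separable_dephased_Bell_pair:
  assumes "\<And>x z. X0 (x(a := z)) = X0 x" and "\<And>x z. X1 (x(a := z)) = X1 x"
    and "0 \<le> r" "r \<le> 1" and "0 \<le> W0" "0 \<le> W1" and "r * W0 \<le> W1" "r * W1 \<le> W0"
  shows "separable a (\<lambda>x y. complex_of_real (dephased_Bell_pair a r W0 W1 X0 X1 x y))"
proof (cases "W1 \<le> W0")
  case True
  with assms show ?thesis by (intro separable_dephased_Bell_pair_ordered)
next
  case False
  with assms have "separable a (\<lambda>x y. complex_of_real (dephased_Bell_pair a r W1 W0 X1 X0 x y))"
    by (intro separable_dephased_Bell_pair_ordered) auto
  then show ?thesis by (simp only: dephased_Bell_pair_swap)
qed

lemma separable_dephasing:
  assumes "i \<noteq> a" and "0 \<le> p" "p \<le> 1"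
  shows "separable a (\<lambda>x y. complex_of_real (dephasing p x y i))"
proof -
  define sign where "sign x = complex_of_real (if x i then -1 else 1)" for x :: "nat \<Rightarrow> bool"
  have "product_vector a sign"
    by (rule product_vectorI[where f = "\<lambda>_. 1"]) (simp_all add: sign_def \<open>i \<noteq> a\<close>)
  then have "separable a (\<lambda>x y.
      complex_of_real (1 - p) * (1 * cnj 1) + complex_of_real p * (sign x * cnj (sign y)))"
    using assms by (intro separable_add separable_scaled_rank_one product_vector_const) auto
  then show ?thesis by (rule separable_cong) (simp add: sign_def dephasing_def)
qed

lemma neighbour_sign_eq_prod:
  "neighbour_sign N E a x = (\<Prod>i\<in>{j. j < N \<and> E a j}. if x i then -1 else 1)"
proof -
  have "{i \<in> {j. j < N \<and> E a j}. x i} = active_neighbours N E a x"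
    by (auto simp: active_neighbours_def)
  then show ?thesis by (simp add: neighbour_sign_def prod_if_eq_power_card)
qed

lemma separable_neighbourhood_dephased:
  fixes N a :: nat and E :: "nat \<Rightarrow> nat \<Rightarrow> bool" and p :: real
  defines "Nb \<equiv> {j. j < N \<and> E a j}"
    and "S \<equiv> \<lambda>x. if x a then neighbour_sign N E a x else 1"
  assumes G: "simple_graph_on N E" and "0 \<le> p" "p \<le> 1 / 2"
    and worst: "(1 - 2 * p) * (1 - p) ^ card Nb \<le> p ^ card Nb"
  shows "separable a (\<lambda>x y. complex_of_real
           (dephasing p x y a * (\<Prod>i\<in>Nb. dephasing p x y i) * S x * S y))"
proof -
  define PS where "PS = PiE Nb (\<lambda>_. UNIV :: bool set)"
  define V where "V s x = (if x a then zsign_on Nb (flip_on Nb s) x else zsign_on Nb s x)" for s x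
  define pair where "pair s x y = dephasing p x y a * (noise_weight p Nb s * V s x * V s y)"
    for s x y
  have "finite Nb" by (simp add: Nb_def)
  have "a \<notin> Nb" using G by (simp add: Nb_def simple_graph_on_def)
  have V: "zsign_on Nb s x * S x = V s x" for s x
    by (simp add: S_def V_def zsign_on_flip_on neighbour_sign_eq_prod Nb_def)
  have "dephasing p x y a * (\<Prod>i\<in>Nb. dephasing p x y i) * S x * S y = (\<Sum>s\<in>PS. pair s x y)" for x y
    unfolding prod_dephasing_eq_sum[OF \<open>finite Nb\<close>] PS_def pair_def
      sum_distrib_left sum_distrib_right
    by (rule sum.cong) (simp_all flip: V add: algebra_simps)
  also have "\<dots> x y = 1 / 2 * (\<Sum>s\<in>PS. pair s x y + pair (flip_on Nb s) x y)" for x y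
    unfolding sum.distrib PS_def sum_flip_on[of "\<lambda>s. pair s x y"] by simp
  finally have expand: "dephasing p x y a * (\<Prod>i\<in>Nb. dephasing p x y i) * S x * S y
      = 1 / 2 * (\<Sum>s\<in>PS. pair s x y + pair (flip_on Nb s) x y)" for x y .
  have pair: "separable a (\<lambda>x y. complex_of_real (pair s x y + pair (flip_on Nb s) x y))"
    if "s \<in> PS" for s
  proof -
    have flip_flip: "flip_on Nb (flip_on Nb s) = s"
      using that by (simp add: PS_def flip_on_flip_on)
    have weight_ge: "(1 - 2 * p) * noise_weight p Nb t \<le> noise_weight p Nb (flip_on Nb t)" for t
      by (rule noise_weight_flip_on_ge[OF \<open>finite Nb\<close> assms(4,5) worst])
    have "separable a (\<lambda>x y. complex_of_real (dephased_Bell_pair a (1 - 2 * p)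
        (noise_weight p Nb s) (noise_weight p Nb (flip_on Nb s))
        (zsign_on Nb s) (zsign_on Nb (flip_on Nb s)) x y))"
      using weight_ge[of s] weight_ge[of "flip_on Nb s"] assms(4,5)
      by (intro separable_dephased_Bell_pair zsign_on_fun_upd[OF \<open>a \<notin> Nb\<close>])
         (simp_all add: flip_flip noise_weight_def prod_nonneg)
    then show ?thesis
      by (rule separable_cong)
         (simp add: dephased_Bell_pair_def pair_def V_def flip_flip dephasing_def algebra_simps)
  qed
  have "separable a (\<lambda>x y. complex_of_real (1 / 2) *
          (\<Sum>s\<in>PS. complex_of_real (pair s x y + pair (flip_on Nb s) x y)))"
    by (intro separable_scaleR separable_sum pair) (simp_all add: PS_def \<open>finite Nb\<close> finite_PiE)
  then show ?thesis by (rule separable_cong) (simp add: expand)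
qed

lemma separable_noisy_rho:
  assumes G: "simple_graph_on N E" and "a < N" and "0 \<le> p" "p \<le> 1 / 2"
    and worst: "(1 - 2 * p) * (1 - p) ^ degree N E a \<le> p ^ degree N E a"
  shows "separable a (\<lambda>x y. complex_of_real (noisy_rho N E p x y))"
proof -
  define Nb where "Nb = {j. j < N \<and> E a j}"
  define R where "R = {0..<N} - insert a Nb"
  define S where "S x = (if x a then neighbour_sign N E a x else 1)" for x
  have "finite Nb" "a \<notin> Nb" "Nb \<subseteq> {0..<N}"
    using G by (auto simp: Nb_def simple_graph_on_def)
  have factor: "noisy_rho N E p x y =
      (\<Prod>i\<in>R. dephasing p x y i) *
      (graph_amp N E (x(a := False)) * graph_amp N E (y(a := False))) *
      (dephasing p x y a * (\<Prod>i\<in>Nb. dephasing p x y i) * S x * S y)" for x y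
  proof -
    have split: "{0..<N} = insert a Nb \<union> R"
      using \<open>a < N\<close> \<open>Nb \<subseteq> {0..<N}\<close> by (auto simp: R_def)
    have "(\<Prod>i\<in>{0..<N}. dephasing p x y i)
        = (\<Prod>i\<in>insert a Nb. dephasing p x y i) * (\<Prod>i\<in>R. dephasing p x y i)"
      unfolding split by (rule prod.union_disjoint) (auto simp: R_def \<open>finite Nb\<close>)
    then show ?thesis
      unfolding noisy_rho_eq_dephased S_def
        graph_amp_split[OF G, of x a] graph_amp_split[OF G, of y a]
      using \<open>finite Nb\<close> \<open>a \<notin> Nb\<close> by (simp add: algebra_simps)
  qed
  have "separable a (\<lambda>x y. \<Prod>i\<in>R. complex_of_real (dephasing p x y i))"
    using assms(3,4) by (intro separable_prod separable_dephasing) (auto simp: R_def)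
  moreover have "separable a (\<lambda>x y. complex_of_real
      (graph_amp N E (x(a := False)) * graph_amp N E (y(a := False))))"
  proof -
    let ?amp = "\<lambda>x. complex_of_real (graph_amp N E (x(a := False)))"
    have "product_vector a ?amp" by (rule product_vectorI[where f = "\<lambda>_. 1" and g = ?amp]) simp_all
    then show ?thesis by (rule separable_rank_oneI) simp
  qed
  moreover have "separable a (\<lambda>x y. complex_of_real
      (dephasing p x y a * (\<Prod>i\<in>Nb. dephasing p x y i) * S x * S y))"
    unfolding Nb_def S_def
    by (rule separable_neighbourhood_dephased[OF G assms(3,4)])
       (use worst in \<open>simp add: degree_def\<close>)
  ultimately have "separable a (\<lambda>x y. (\<Prod>i\<in>R. complex_of_real (dephasing p x y i)) *
      complex_of_real (graph_amp N E (x(a := False)) * graph_amp N E (y(a := False))) *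
      complex_of_real (dephasing p x y a * (\<Prod>i\<in>Nb. dephasing p x y i) * S x * S y))"
    by (intro separable_mult)
  then show ?thesis
    by (rule separable_cong) (simp only: factor of_real_mult of_real_prod)
qed

lemma min_degree_attained:
  assumes "0 < N"
  obtains a where "a < N" and "degree N E a = min_degree N E"
proof -
  have "min_degree N E \<in> degree N E ` {0..<N}"
    unfolding min_degree_def using assms by (intro Min_in) auto
  then show thesis using that by auto
qed

theorem mainTheorem3:
  fixes N :: nat and E :: "nat \<Rightarrow> nat \<Rightarrow> bool" and p :: real
  assumes "simple_graph_on N E"
    and "graph_connected N E"
    and "N \<ge> 2"
    and "min_degree N E \<ge> 1"
    and "0 \<le> p" and "p \<le> 1 / 2"
    and "2 * (1 - p) ^ (min_degree N E + 1) \<le> (1 - p) ^ min_degree N E + p ^ min_degree N E"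
  shows "\<not> purifiable N E p"
proof
  assume "purifiable N E p"
  then obtain m R A where trace: "out_trace N E p m R A \<noteq> 0"
    and fidelity: "out_fidelity N E p m R A \<ge> 1 - 1 / 4"
    unfolding purifiable_def by (meson divide_pos_pos zero_less_numeral zero_less_one)
  obtain a where "a < N" and deg: "degree N E a = min_degree N E"
    using min_degree_attained[of N E] \<open>N \<ge> 2\<close> by force
  then obtain b where "b < N" "E a b"
    using \<open>min_degree N E \<ge> 1\<close> unfolding deg[symmetric] degree_def
    by (metis (mono_tags, lifting) Collect_empty_eq card.empty not_one_le_zero)
  have "(1 - 2 * p) * (1 - p) ^ degree N E a \<le> p ^ degree N E a"
    using assms(7) unfolding deg by (simp add: algebra_simps)
  then have "separable a (\<lambda>x y. complex_of_real (noisy_rho N E p x y))"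
    by (rule separable_noisy_rho[OF assms(1) \<open>a < N\<close> assms(5,6)])
  with out_fidelity_le_half[OF assms(1) \<open>a < N\<close> \<open>b < N\<close> \<open>E a b\<close>] trace
  have "out_fidelity N E p m R A \<le> 1 / 2" by blast
  with fidelity show False by simp
qed

end
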